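(* For each positive integer $n\ge 4$, there exists a family of $n$ sidigraphs of order $4^n$ which are pairwise cospectral, each having only integer eigenvalues, and each being strongly connected, non symmetric and non cycle balanced.
   Context: A sidigraph is a digraph (no loops, at most one arc from $u$ to $v$) with a sign $\pm1$ on each arc; its adjacency matrix has entry $\sigma(v_i,v_j)$ if there is an arc from $v_i$ to $v_j$ and $0$ otherwise, and its eigenvalues/spectrum are those of this matrix (spectrum as a multiset). Two sidigraphs are cospectral if they have the same spectrum. A sidigraph is strongly connected if its underlying digraph is. It is symmetric if whenever $(u,v)$ is an arc, $(v,u)$ is an arc with the same sign. The sign of a cycle is the product of the signs of its arcs; a sidigraph is cycle balanced if every directed cycle is positive, non cycle balanced otherwise. *)

theory Defs
  imports "Jordan_Normal_Form.Char_Poly" "HOL-Computational_Algebra.Polynomial"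
begin

text \<open>A sidigraph of order N is represented by its signed adjacency matrix,
an N x N integer matrix on vertex set {0..<N}: entry (i,j) is the sign
(+1 or -1) of the arc from i to j if it exists and 0 otherwise; no loops.\<close>

definition sidigraph :: "nat \<Rightarrow> int mat \<Rightarrow> bool" where
  "sidigraph N A \<longleftrightarrow> A \<in> carrier_mat N N \<and>
     (\<forall>i<N. \<forall>j<N. A $$ (i,j) \<in> {-1,0,1}) \<and> (\<forall>i<N. A $$ (i,i) = 0)"

definition arc :: "int mat \<Rightarrow> nat \<Rightarrow> nat \<Rightarrow> bool" where
  "arc A i j \<longleftrightarrow> i < dim_row A \<and> j < dim_col A \<and> A $$ (i,j) \<noteq> 0"

definition spectrum_sd :: "int mat \<Rightarrow> complex multiset" where
  "spectrum_sd A = proots (char_poly (map_mat complex_of_int A))"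

definition cospectral :: "int mat \<Rightarrow> int mat \<Rightarrow> bool" where
  "cospectral A B \<longleftrightarrow> spectrum_sd A = spectrum_sd B"

definition integral_spectrum :: "int mat \<Rightarrow> bool" where
  "integral_spectrum A \<longleftrightarrow> (\<forall>x \<in># spectrum_sd A. x \<in> \<int>)"

definition strongly_connected :: "int mat \<Rightarrow> bool" where
  "strongly_connected A \<longleftrightarrow>
     (\<forall>u<dim_row A. \<forall>v<dim_row A. (u,v) \<in> {(i,j). arc A i j}\<^sup>*)"

definition symmetric_sd :: "int mat \<Rightarrow> bool" where
  "symmetric_sd A \<longleftrightarrow> (\<forall>u<dim_row A. \<forall>v<dim_row A. arc A u v \<longrightarrow> A $$ (v,u) = A $$ (u,v))"

definition dcycle :: "int mat \<Rightarrow> nat list \<Rightarrow> bool" where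
  "dcycle A vs \<longleftrightarrow> length vs \<ge> 2 \<and> distinct vs \<and>
     (\<forall>i<length vs. arc A (vs ! i) (vs ! ((i + 1) mod length vs)))"

definition cycle_sign :: "int mat \<Rightarrow> nat list \<Rightarrow> int" where
  "cycle_sign A vs = (\<Prod>i<length vs. A $$ (vs ! i, vs ! ((i + 1) mod length vs)))"

definition cycle_balanced :: "int mat \<Rightarrow> bool" where
  "cycle_balanced A \<longleftrightarrow> (\<forall>vs. dcycle A vs \<longrightarrow> cycle_sign A vs = 1)"

definition isomorphic_sd :: "int mat \<Rightarrow> int mat \<Rightarrow> bool" where
  "isomorphic_sd A B \<longleftrightarrow> dim_row A = dim_row B \<and>
     (\<exists>p. p permutes {0..<dim_row A} \<and>
        (\<forall>i<dim_row A. \<forall>j<dim_row A. B $$ (p i, p j) = A $$ (i,j)))"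

end

theory Submission
  imports Defs
begin

text \<open>Every vertex x of a digraph E on {0..<m} is split into the two vertices 2x and 2x+1,
and the arc from vertex i to vertex j receives the sign (-1)^i whenever E has an arc from
i div 2 to j div 2. In the square of the resulting matrix the two copies of each middle
vertex cancel, so the matrix squares to zero and its spectrum is 0 with full multiplicity.
Taking for E the complete digraph on m vertices with the arcs from 0 to 1,...,k removed
gives, for k < n, sidigraphs that are strongly connected, non symmetric and non cycle
balanced, and that are pairwise non-isomorphic since they have 4 (m (m - 1) - k) arcs.\<close>

lemma eigenvalue_nilpotent_eq_0:
  fixes C :: "'a :: field mat"
  assumes C: "C \<in> carrier_mat N N" and nil: "C ^\<^sub>m k = 0\<^sub>m N N" and ev: "eigenvalue C a"
  shows "a = 0"
proof -
  from ev obtain v where v: "eigenvector C v a" unfolding eigenvalue_def by blast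
  then have v_carrier: "v \<in> carrier_vec N" and "v \<noteq> 0\<^sub>v N"
    using C unfolding eigenvector_def by auto
  then obtain i where i: "i < N" "v $ i \<noteq> 0"
    by (metis carrier_vecD eq_vecI index_zero_vec(1,2))
  have "a ^ k \<cdot>\<^sub>v v = C ^\<^sub>m k *\<^sub>v v" by (rule eigenvector_pow[OF C v, symmetric])
  also have "\<dots> = 0\<^sub>v N" using nil v_carrier by (auto intro: eq_vecI simp: scalar_prod_def)
  finally have "a ^ k * v $ i = 0" using i by (metis index_smult_vec(1) index_zero_vec(1) v_carrier carrier_vecD)
  then show "a = 0" using i by simp
qed

lemma char_poly_nilpotent:
  fixes C :: "complex mat"
  assumes C: "C \<in> carrier_mat N N" and nil: "C ^\<^sub>m k = 0\<^sub>m N N"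
  shows "char_poly C = [:0, 1:] ^ N"
proof -
  obtain as where as: "char_poly C = (\<Prod>a\<leftarrow>as. [:- a, 1:])" "length as = N"
    using char_poly_factorized[OF C] by blast
  have "a = 0" if "a \<in> set as" for a
  proof (rule eigenvalue_nilpotent_eq_0[OF C nil])
    have "poly (char_poly C) a = 0" unfolding as(1) using that by (simp add: poly_prod_list_zero_iff)
    then show "eigenvalue C a" using eigenvalue_root_char_poly[OF C] by simp
  qed
  then have "as = replicate N 0" using as(2) by (metis replicate_length_same)
  then show ?thesis using as(1) by (simp add: prod_list_replicate)
qed

lemma spectrum_sd_square_zero:
  assumes A: "A \<in> carrier_mat N N" and sq: "A * A = 0\<^sub>m N N"
  shows "spectrum_sd A = replicate_mset N 0"
proof -
  let ?C = "map_mat complex_of_int A"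
  have "?C * ?C = map_mat complex_of_int (A * A)"
    by (rule of_int_hom.mat_hom_mult[OF A A, symmetric])
  also have "\<dots> = 0\<^sub>m N N" using sq by (auto intro: eq_matI)
  finally have "?C ^\<^sub>m 2 = 0\<^sub>m N N" by (simp add: numeral_2_eq_2)
  then have "char_poly ?C = [:0, 1:] ^ N" using A by (intro char_poly_nilpotent) auto
  then show ?thesis unfolding spectrum_sd_def by (simp add: proots_power)
qed

definition sum_abs_entries :: "int mat \<Rightarrow> int" where
  "sum_abs_entries A = (\<Sum>i<dim_row A. \<Sum>j<dim_row A. \<bar>A $$ (i,j)\<bar>)"

lemma isomorphic_sd_sum_abs_entries:
  assumes "isomorphic_sd A B"
  shows "sum_abs_entries A = sum_abs_entries B"
proof -
  from assms obtain p where dims: "dim_row A = dim_row B" and p: "p permutes {..<dim_row A}"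
    and entries: "\<forall>i<dim_row A. \<forall>j<dim_row A. B $$ (p i, p j) = A $$ (i,j)"
    unfolding isomorphic_sd_def atLeast0LessThan by blast
  define V where "V = {..<dim_row A}"
  have bij: "bij_betw p V V" using p permutes_imp_bij unfolding V_def by blast
  have "sum_abs_entries A = (\<Sum>i\<in>V. \<Sum>j\<in>V. \<bar>B $$ (p i, p j)\<bar>)"
    unfolding sum_abs_entries_def V_def using entries by simp
  also have "\<dots> = (\<Sum>i\<in>V. \<Sum>j\<in>V. \<bar>B $$ (p i, j)\<bar>)"
    by (intro sum.cong refl sum.reindex_bij_betw[OF bij])
  also have "\<dots> = (\<Sum>i\<in>V. \<Sum>j\<in>V. \<bar>B $$ (i, j)\<bar>)"
    by (rule sum.reindex_bij_betw[OF bij])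
  also have "\<dots> = sum_abs_entries B" unfolding sum_abs_entries_def V_def dims ..
  finally show ?thesis .
qed

definition signed_double :: "(nat \<Rightarrow> nat \<Rightarrow> bool) \<Rightarrow> nat \<Rightarrow> int mat" where
  "signed_double E m =
     mat (2*m) (2*m) (\<lambda>(i,j). if E (i div 2) (j div 2) then (-1) ^ i else 0)"

lemma signed_double_carrier: "signed_double E m \<in> carrier_mat (2*m) (2*m)"
  by (simp add: signed_double_def)

lemma arc_signed_double:
  "arc (signed_double E m) i j \<longleftrightarrow> i < 2*m \<and> j < 2*m \<and> E (i div 2) (j div 2)"
  unfolding arc_def by (auto simp: signed_double_def split: if_splits)

lemma sum_pairs_lessThan_double:
  "(\<Sum>j<2*(m::nat). f j) = (\<Sum>y<m. f (2*y) + f (2*y+1) :: 'a :: comm_monoid_add)"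
  by (induction m) (simp_all add: add.assoc)

lemma sidigraph_signed_double:
  assumes "\<And>x. \<not> E x x"
  shows "sidigraph (2*m) (signed_double E m)"
  using assms unfolding sidigraph_def by (auto simp: signed_double_def minus_one_power_iff)

lemma signed_double_square:
  "signed_double E m * signed_double E m = 0\<^sub>m (2*m) (2*m)"
proof (rule eq_matI)
  fix i j assume "i < dim_row (0\<^sub>m (2*m) (2*m) :: int mat)" "j < dim_col (0\<^sub>m (2*m) (2*m) :: int mat)"
  then have ij: "i < 2*m" "j < 2*m" by simp_all
  define g where "g y = (if E (i div 2) y \<and> E y (j div 2) then 1 else 0 :: int)" for y
  have "(signed_double E m * signed_double E m) $$ (i,j) = (\<Sum>l<2*m. (-1) ^ i * ((-1) ^ l * g (l div 2)))"
    using ij by (auto simp: signed_double_def scalar_prod_def lessThan_atLeast0 g_def intro!: sum.cong)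
  also have "\<dots> = (-1) ^ i * (\<Sum>l<2*m. (-1) ^ l * g (l div 2))"
    by (simp add: sum_distrib_left)
  also have "(\<Sum>l<2*m. (-1) ^ l * g (l div 2)) = 0"
    \<comment> \<open>the two copies 2y and 2y+1 of the middle vertex contribute with opposite signs\<close>
    by (simp add: sum_pairs_lessThan_double)
  finally show "(signed_double E m * signed_double E m) $$ (i,j) = 0\<^sub>m (2*m) (2*m) $$ (i,j)"
    using ij by simp
qed (simp_all add: signed_double_def)

lemma spectrum_signed_double: "spectrum_sd (signed_double E m) = replicate_mset (2*m) 0"
  by (rule spectrum_sd_square_zero[OF signed_double_carrier signed_double_square])

lemma trancl_arc_signed_double:
  assumes "(x, y) \<in> {(x, y). x < m \<and> y < m \<and> E x y}\<^sup>+"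
    and "i < 2*m" "j < 2*m" "i div 2 = x" "j div 2 = y"
  shows "(i, j) \<in> {(i, j). arc (signed_double E m) i j}\<^sup>+"
  using assms
proof (induction arbitrary: j rule: trancl_induct)
  case (base y)
  then show ?case by (auto simp: arc_signed_double)
next
  case (step y z)
  have "y < m" using step.hyps(2) by simp
  then have "(i, 2*y) \<in> {(i, j). arc (signed_double E m) i j}\<^sup>+" using step by simp
  moreover have "arc (signed_double E m) (2*y) j" using step \<open>y < m\<close> by (auto simp: arc_signed_double)
  ultimately show ?case by (simp add: trancl_into_trancl)
qed

lemma strongly_connected_signed_double:
  assumes "\<And>x y. x < m \<Longrightarrow> y < m \<Longrightarrow> (x, y) \<in> {(x, y). x < m \<and> y < m \<and> E x y}\<^sup>+"
  shows "strongly_connected (signed_double E m)"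
  unfolding strongly_connected_def
proof (intro allI impI)
  fix i j assume "i < dim_row (signed_double E m)" "j < dim_row (signed_double E m)"
  then have ij: "i < 2*m" "j < 2*m" by (simp_all add: signed_double_def)
  then have "(i div 2, j div 2) \<in> {(x, y). x < m \<and> y < m \<and> E x y}\<^sup>+" by (intro assms) auto
  with ij show "(i, j) \<in> {(i, j). arc (signed_double E m) i j}\<^sup>*"
    by (blast intro: trancl_into_rtrancl trancl_arc_signed_double)
qed

lemma not_symmetric_signed_double:
  assumes "x < m" "y < m" "E x y"
  shows "\<not> symmetric_sd (signed_double E m)"
proof -
  let ?A = "signed_double E m"
  have "arc ?A (2*x+1) (2*y)" using assms by (simp add: arc_signed_double)
  moreover have "?A $$ (2*y, 2*x+1) \<noteq> ?A $$ (2*x+1, 2*y)"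
    using assms by (auto simp: signed_double_def)
  moreover have "2*x+1 < dim_row ?A" "2*y < dim_row ?A"
    using assms by (simp_all add: signed_double_def)
  ultimately show ?thesis unfolding symmetric_sd_def by blast
qed

lemma not_cycle_balanced_signed_double:
  assumes "x < m" "y < m" "E x y" "E y x"
  shows "\<not> cycle_balanced (signed_double E m)"
proof -
  let ?A = "signed_double E m" and ?c = "[2*x, 2*y+1]"
  have "arc ?A (2*x) (2*y+1)" "arc ?A (2*y+1) (2*x)" and "2*x \<noteq> 2*y+1"
    using assms by (simp_all add: arc_signed_double) presburger
  then have "dcycle ?A ?c" unfolding dcycle_def by (auto simp: less_Suc_eq)
  moreover have "cycle_sign ?A ?c = -1"
    using assms by (simp add: cycle_sign_def signed_double_def lessThan_nat_numeral)
  ultimately show ?thesis unfolding cycle_balanced_def by force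
qed

lemma sum_abs_entries_signed_double:
  "sum_abs_entries (signed_double E m) = 4 * (\<Sum>x<m. \<Sum>y<m. if E x y then 1 else 0)"
proof -
  have "sum_abs_entries (signed_double E m) =
          (\<Sum>i<2*m. \<Sum>j<2*m. if E (i div 2) (j div 2) then 1 else 0)"
    unfolding sum_abs_entries_def by (auto simp: signed_double_def intro!: sum.cong)
  also have "\<dots> = (\<Sum>x<m. \<Sum>y<m. 4 * (if E x y then 1 else 0))"
    by (simp add: sum_pairs_lessThan_double sum.distrib[symmetric])
  finally show ?thesis by (simp only: sum_distrib_left)
qed

definition complete_minus_fan :: "nat \<Rightarrow> nat \<Rightarrow> nat \<Rightarrow> bool" where
  "complete_minus_fan k x y \<longleftrightarrow> x \<noteq> y \<and> \<not> (x = 0 \<and> 1 \<le> y \<and> y \<le> k)"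

lemma arc_count_complete_minus_fan:
  assumes "k < m"
  shows "(\<Sum>x<m. \<Sum>y<m. if complete_minus_fan k x y then 1 else 0) =
           (\<Sum>x<m. \<Sum>y<m. if complete_minus_fan 0 x y then 1 else 0) - int k"
proof -
  define fan where "fan x y = (if x = 0 \<and> 1 \<le> y \<and> y \<le> k then 1 else 0 :: int)" for x y :: nat
  have split: "(if complete_minus_fan k x y then 1 else 0) =
                 (if complete_minus_fan 0 x y then 1 else 0) - fan x y" for x y
    by (auto simp: complete_minus_fan_def fan_def)
  have "(\<Sum>x<m. \<Sum>y<m. fan x y) = (\<Sum>x<m. if x = 0 then (\<Sum>y<m. fan 0 y) else 0)"
    by (rule sum.cong) (auto simp: fan_def)
  also have "\<dots> = (\<Sum>y<m. fan 0 y)" using assms by simp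
  also have "\<dots> = int (card ({..<m} \<inter> {y. 1 \<le> y \<and> y \<le> k}))"
    unfolding fan_def by (simp add: sum.If_cases)
  also have "{..<m} \<inter> {y. 1 \<le> y \<and> y \<le> k} = {1..k}" using assms by auto
  finally show ?thesis unfolding split by (simp add: sum_subtractf)
qed

lemma trancl_complete_minus_fan:
  assumes "k + 2 \<le> m" "3 \<le> m" "x < m" "y < m"
  shows "(x, y) \<in> {(x, y). x < m \<and> y < m \<and> complete_minus_fan k x y}\<^sup>+"
proof -
  let ?R = "{(x, y). x < m \<and> y < m \<and> complete_minus_fan k x y}"
  have arc: "(u, v) \<in> ?R\<^sup>+" if "u < m" "v < m" "complete_minus_fan k u v" for u v
    using that by auto
  \<comment> \<open>vertex 1 is a hub: 0 reaches it through m - 1, and it lies on the cycle 1, 2, 1\<close>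
  have "(1, 2) \<in> ?R\<^sup>+" "(2, 1) \<in> ?R\<^sup>+" "(0, m - 1) \<in> ?R\<^sup>+" "(m - 1, 1) \<in> ?R\<^sup>+"
    using assms by (auto intro!: arc simp: complete_minus_fan_def)
  then have loop: "(1, 1) \<in> ?R\<^sup>+" and from_0: "(0, 1) \<in> ?R\<^sup>+"
    by (meson trancl_trans)+
  have to_hub: "(u, 1) \<in> ?R\<^sup>+" if "u < m" for u
  proof -
    consider "u = 0" | "u = 1" | "u \<noteq> 0" "u \<noteq> 1" by blast
    then show ?thesis
      by cases (use loop from_0 that assms in \<open>auto intro: arc simp: complete_minus_fan_def\<close>)
  qed
  have from_hub: "(1, v) \<in> ?R\<^sup>+" if "v < m" for v
    by (cases "v = 1") (use loop that assms in \<open>auto intro: arc simp: complete_minus_fan_def\<close>)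
  show ?thesis using to_hub[OF \<open>x < m\<close>] from_hub[OF \<open>y < m\<close>] by (rule trancl_trans)
qed

lemma not_isomorphic_complete_minus_fan:
  assumes "k < m" "l < m" "k \<noteq> l"
  shows "\<not> isomorphic_sd (signed_double (complete_minus_fan k) m) (signed_double (complete_minus_fan l) m)"
proof
  assume "isomorphic_sd (signed_double (complete_minus_fan k) m) (signed_double (complete_minus_fan l) m)"
  then have "sum_abs_entries (signed_double (complete_minus_fan k) m) =
               sum_abs_entries (signed_double (complete_minus_fan l) m)"
    by (rule isomorphic_sd_sum_abs_entries)
  then have "int k = int l"
    using arc_count_complete_minus_fan[OF \<open>k < m\<close>] arc_count_complete_minus_fan[OF \<open>l < m\<close>]
    unfolding sum_abs_entries_signed_double by linarith
  with \<open>k \<noteq> l\<close> show False by simp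
qed

theorem theorem2p11:
  fixes n :: nat
  assumes "n \<ge> 4"
  shows "\<exists>G :: nat \<Rightarrow> int mat.
           (\<forall>k<n. sidigraph (4 ^ n) (G k)) \<and>
           (\<forall>k<n. \<forall>l<n. k \<noteq> l \<longrightarrow> \<not> isomorphic_sd (G k) (G l)) \<and>
           (\<forall>k<n. \<forall>l<n. cospectral (G k) (G l)) \<and>
           (\<forall>k<n. integral_spectrum (G k)) \<and>
           (\<forall>k<n. strongly_connected (G k)) \<and>
           (\<forall>k<n. \<not> symmetric_sd (G k)) \<and>
           (\<forall>k<n. \<not> cycle_balanced (G k))"
proof -
  obtain n' where n': "n = Suc n'" using assms by (cases n) auto
  define m :: nat where "m = 2 * 4 ^ n'"
  have order: "2 * m = 4 ^ n" by (simp add: m_def n')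
  have "n' < 2 ^ n'" by (rule less_exp)
  also have "(2::nat) ^ n' \<le> 4 ^ n'" by (rule power_mono) simp_all
  finally have m_large: "n + 2 \<le> m" "3 \<le> m" using assms unfolding m_def n' by linarith+
  let ?G = "\<lambda>k. signed_double (complete_minus_fan k) m"
  have sidigraph: "sidigraph (4 ^ n) (?G k)" for k
    unfolding order[symmetric] by (rule sidigraph_signed_double) (simp add: complete_minus_fan_def)
  have spectrum: "spectrum_sd (?G k) = replicate_mset (4 ^ n) 0" for k
    unfolding order[symmetric] by (rule spectrum_signed_double)
  have connected: "strongly_connected (?G k)" if "k < n" for k
    using that m_large by (intro strongly_connected_signed_double trancl_complete_minus_fan) auto
  have not_symmetric: "\<not> symmetric_sd (?G k)" for k
    by (rule not_symmetric_signed_double[of 1 m 2])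
       (use m_large in \<open>simp_all add: complete_minus_fan_def\<close>)
  have not_balanced: "\<not> cycle_balanced (?G k)" for k
    by (rule not_cycle_balanced_signed_double[of 1 m 2])
       (use m_large in \<open>simp_all add: complete_minus_fan_def\<close>)
  show ?thesis
    using m_large
    by (intro exI[of _ ?G] conjI allI impI sidigraph connected not_symmetric not_balanced
        not_isomorphic_complete_minus_fan) (simp_all add: cospectral_def integral_spectrum_def spectrum)
qed

end
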